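(* In the setting below, assume $\|\nabla f_i(x)\|\le G_i$ for all $x$ and $i$, and run the method for all epochs $k\in\mathbb N$ with arbitrary permutations. Suppose (1) $\eta_k=r_k\tilde\eta_k$ for all $k\in\mathbb N$, where $r_k=r\vee\max_{\ell\in[k]}\|x_\ell-x_1\|$ for some $r>0$ and $(\tilde\eta_k)_{k\in\mathbb N}$ is a positive sequence; and (2) $\sum_{k=1}^\infty6\bar G^2n^2\tilde\eta_k^2\le c^2$ for some constant $0<c<1$. Then $$\|x_k-x_1\|\le\frac2{1-c}\|x_*-x_1\|+\frac c{1-c}r\quad\text{for all }k\in\mathbb N.$$
   Context: Setting. Let $n,d\in\mathbb N$, let $f_1,\dots,f_n:\mathbb R^d\to\mathbb R$ be convex, $f=\frac1n\sum_{i=1}^nf_i$, let $\psi:\mathbb R^d\to\mathbb R\cup\{+\infty\}$ be proper, closed and convex, and $F=f+\psi$. For a convex function $g$, $\nabla g(x)$ denotes an element of $\partial g(x)$ (for each $f_i$ a fixed selection of subgradients, the same one used in the algorithm). Assume there is $x_*\in\mathbb R^d$ with $F(x_* )=\inf_{x}F(x)\in\mathbb R$. Proximal shuffling gradient method: given $x_1\in\mathrm{dom}\,\psi$ and stepsizes $\eta_k>0$, for each epoch $k$: choose a permutation $\sigma_k=(\sigma_k^1,\dots,\sigma_k^n)$ of $[n]=\{1,\dots,n\}$; set $x_k^1=x_k$ and $x_k^{i+1}=x_k^i-\eta_k\nabla f_{\sigma_k^i}(x_k^i)$ for $i=1,\dots,n$; set $x_{k+1}=\arg\min_{x\in\mathbb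 R^d}\{n\psi(x)+\frac{1}{2\eta_k}\|x-x_k^{n+1}\|^2\}$. $a\vee b=\max\{a,b\}$. Lipschitz condition: constants $G_i>0$ with $\|\nabla f_i(x)\|\le G_i$ for all $x\in\mathbb R^d$, $i\in[n]$ (for every subgradient); $\bar G=\frac1n\sum_{i=1}^nG_i$. *)

theory Defs
  imports "HOL-Analysis.Analysis"
begin

definition is_subgrad :: "('a::euclidean_space \<Rightarrow> real) \<Rightarrow> 'a \<Rightarrow> 'a \<Rightarrow> bool" where
  "is_subgrad h x v \<longleftrightarrow> (\<forall>y. h y \<ge> h x + v \<bullet> (y - x))"

text \<open>Inner iterates of one epoch: epoch_pt g eta s x i is x_k^(i+1) when x = x_k,
  eta = eta_k, s = sigma_k; the component used at inner step i+1 is g (s (i+1)).\<close>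
fun epoch_pt :: "(nat \<Rightarrow> 'a::real_vector \<Rightarrow> 'a) \<Rightarrow> real \<Rightarrow> (nat \<Rightarrow> nat) \<Rightarrow> 'a \<Rightarrow> nat \<Rightarrow> 'a" where
  "epoch_pt g eta s x 0 = x"
| "epoch_pt g eta s x (Suc i) =
     epoch_pt g eta s x i - eta *\<^sub>R g (s (Suc i)) (epoch_pt g eta s x i)"

end

theory Submission imports Defs begin

text \<open>
  Let S be the sum of the G_i. Up to the drift of the inner iterates, one epoch followed by the
  proximal step is a proximal subgradient step with step n eta_k; measured against a minimiser
  x_* this gives ||x_{k+1} - x_*||^2 <= ||x_k - x_*||^2 + 6 eta_k^2 S^2. Now induct on k with the
  radius B = (2 ||x_* - x_1|| + c r) / (1 - c): if x_1, ..., x_k lie within B of x_1, then every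
  r_l with l <= k is at most max r B, so summing the one-epoch bounds gives
  ||x_{k+1} - x_*|| <= ||x_* - x_1|| + c max r B, whence ||x_{k+1} - x_1|| <= 2 ||x_* - x_1|| +
  c max r B <= B.
\<close>

lemma le_if_le_add_small_multiple:
  fixes A B C :: real
  assumes le: "\<And>t. 0 < t \<Longrightarrow> t \<le> 1 \<Longrightarrow> A \<le> B + t * C" and "C \<ge> 0"
  shows "A \<le> B"
proof (rule ccontr)
  assume "\<not> A \<le> B"
  hence gap: "A - B > 0" by simp
  define t where "t = min 1 ((A - B) / (2 * (C + 1)))"
  have t: "0 < t" "t \<le> 1" using gap \<open>C \<ge> 0\<close> by (auto simp: t_def)
  have "t * C \<le> (A - B) / (2 * (C + 1)) * C"
    using \<open>C \<ge> 0\<close> by (intro mult_right_mono) (auto simp: t_def)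
  also have "\<dots> < A - B"
    using gap \<open>C \<ge> 0\<close> mult_strict_right_mono[of B A "C + 2"] by (simp add: field_simps)
  finally show False using le[OF t] by simp
qed

lemma prox_variational_ineq:
  fixes p y z :: "'a::real_inner"
  assumes "convex D" "convex_on D psi" "p \<in> D" "y \<in> D" "eta > 0" "m \<ge> 0"
    and prox_min: "\<forall>w\<in>D. m * psi p + 1 / (2 * eta) * (norm (p - z))\<^sup>2
                          \<le> m * psi w + 1 / (2 * eta) * (norm (w - z))\<^sup>2"
  shows "m * (psi p - psi y) \<le> 1 / eta * inner (p - z) (y - p)"
\<comment> \<open>Compare p with the points (1 - t) p + t y of the segment towards y and let t tend to 0.\<close>
proof (rule le_if_le_add_small_multiple[where C = "(norm (y - p))\<^sup>2 / (2 * eta)"])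
  fix t :: real assume t: "0 < t" "t \<le> 1"
  define w where "w = (1 - t) *\<^sub>R p + t *\<^sub>R y"
  have "w \<in> D" using assms t unfolding w_def by (simp add: convexD)
  have psi_w: "psi w \<le> (1 - t) * psi p + t * psi y"
    using convex_onD[OF assms(2), of t p y] assms t by (simp add: w_def)
  have w_z: "w - z = (p - z) + t *\<^sub>R (y - p)" unfolding w_def by (simp add: algebra_simps)
  have norm_w: "(norm (w - z))\<^sup>2
      = (norm (p - z))\<^sup>2 + 2 * t * inner (p - z) (y - p) + t\<^sup>2 * (norm (y - p))\<^sup>2"
    unfolding w_z power2_norm_eq_inner by (simp add: inner_add inner_commute power2_eq_square algebra_simps)
  have "m * psi p + 1 / (2 * eta) * (norm (p - z))\<^sup>2
      \<le> m * ((1 - t) * psi p + t * psi y) + 1 / (2 * eta) * (norm (w - z))\<^sup>2"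
    using prox_min \<open>w \<in> D\<close> psi_w \<open>m \<ge> 0\<close> by (smt (verit) mult_left_mono)
  hence "t * (m * (psi p - psi y))
      \<le> 1 / (2 * eta) * (2 * t * inner (p - z) (y - p) + t\<^sup>2 * (norm (y - p))\<^sup>2)"
    unfolding norm_w by (simp add: algebra_simps)
  also have "\<dots> = t * (1 / eta * inner (p - z) (y - p) + t * ((norm (y - p))\<^sup>2 / (2 * eta)))"
    using \<open>eta > 0\<close> by (simp add: field_simps power2_eq_square)
  finally have "t * (m * (psi p - psi y))
      \<le> t * (1 / eta * inner (p - z) (y - p) + t * ((norm (y - p))\<^sup>2 / (2 * eta)))" .
  thus "m * (psi p - psi y) \<le> 1 / eta * inner (p - z) (y - p) + t * ((norm (y - p))\<^sup>2 / (2 * eta))"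
    using t by simp
qed (use \<open>eta > 0\<close> in simp)

lemma subgrad_inner_le:
  assumes "is_subgrad f z v" "is_subgrad f p w" "norm v \<le> G" "norm w \<le> G"
  shows "inner v (y - p) \<le> f y - f p + 2 * G * norm (z - p)"
proof -
  have "f y \<ge> f z + inner v (y - z)" "f z \<ge> f p + inner w (z - p)"
    using assms(1,2) unfolding is_subgrad_def by blast+
  moreover have "inner v (z - p) \<le> G * norm (z - p)"
    using norm_cauchy_schwarz[of v "z - p"] assms(3) by (smt (verit) mult_right_mono norm_ge_zero)
  moreover have "- inner w (z - p) \<le> G * norm (z - p)"
    using norm_cauchy_schwarz[of "- w" "z - p"] assms(4) by (smt (verit) mult_right_mono norm_ge_zero norm_minus_cancel inner_minus_left)
  moreover have "inner v (y - p) = inner v (y - z) + inner v (z - p)"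
    by (simp add: inner_diff_right)
  ultimately show ?thesis by linarith
qed

lemma sum_shift_permutes:
  fixes h :: "nat \<Rightarrow> 'b::comm_monoid_add"
  assumes "s permutes {1..n}"
  shows "(\<Sum>i<n. h (s (Suc i))) = (\<Sum>i=1..n. h i)"
proof -
  have "(\<Sum>i<n. h (s (Suc i))) = (\<Sum>i=1..n. h (s i))"
    by (rule sum_bounds_lt_plus1)
  also have "\<dots> = (\<Sum>i=1..n. h i)"
    using sum.permute[OF assms, of h] by (simp add: comp_def)
  finally show ?thesis .
qed

lemma sum_mult_partial_sums_le:
  fixes a :: "nat \<Rightarrow> real"
  assumes "\<forall>i<m. a i \<ge> 0"
  shows "(\<Sum>i<m. a i * (\<Sum>j<i. a j)) \<le> (\<Sum>i<m. a i)\<^sup>2 / 2"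
  using assms
proof (induction m)
  case (Suc m)
  have "(\<Sum>i<Suc m. a i * (\<Sum>j<i. a j)) \<le> (\<Sum>i<m. a i)\<^sup>2 / 2 + a m * (\<Sum>j<m. a j)"
    using Suc by simp
  also have "\<dots> \<le> (\<Sum>i<Suc m. a i)\<^sup>2 / 2"
    using Suc.prems by (simp add: power2_eq_square algebra_simps)
  finally show ?case .
qed simp

lemma epoch_pt_eq_sum:
  "epoch_pt g eta s x m = x - eta *\<^sub>R (\<Sum>i<m. g (s (Suc i)) (epoch_pt g eta s x i))"
  by (induction m) (simp_all add: algebra_simps)

lemma norm_epoch_pt_diff_le:
  fixes x :: "'a::real_normed_vector"
  assumes "\<forall>i<m. norm (g (s (Suc i)) (epoch_pt g eta s x i)) \<le> Gs i" "eta \<ge> 0"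
  shows "norm (epoch_pt g eta s x m - x) \<le> eta * (\<Sum>i<m. Gs i)"
  using assms
proof (induction m)
  case (Suc m)
  have "norm (epoch_pt g eta s x (Suc m) - x)
      = norm ((epoch_pt g eta s x m - x) - eta *\<^sub>R g (s (Suc m)) (epoch_pt g eta s x m))"
    by (simp add: algebra_simps)
  also have "\<dots> \<le> norm (epoch_pt g eta s x m - x) + norm (eta *\<^sub>R g (s (Suc m)) (epoch_pt g eta s x m))"
    by (rule norm_triangle_ineq4)
  also have "\<dots> \<le> eta * (\<Sum>i<m. Gs i) + eta * Gs m"
    using Suc by (intro add_mono) (simp_all add: mult_left_mono)
  finally show ?case by (simp add: algebra_simps)
qed simp

lemma epoch_grad_sum_inner_le:
  fixes x p y :: "'a::euclidean_space"
  assumes subgrad: "\<forall>i\<in>{1..n}. \<forall>v. is_subgrad (fs i) v (g i v)"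
    and grad_bound: "\<forall>i\<in>{1..n}. \<forall>v w. is_subgrad (fs i) v w \<longrightarrow> norm w \<le> G i"
    and perm: "s permutes {1..n}" and "eta \<ge> 0"
  shows "inner (\<Sum>i<n. g (s (Suc i)) (epoch_pt g eta s x i)) (y - p)
      \<le> (\<Sum>i=1..n. fs i y) - (\<Sum>i=1..n. fs i p)
        + eta * (\<Sum>i=1..n. G i)\<^sup>2 + 2 * (\<Sum>i=1..n. G i) * norm (p - x)"
proof -
  define z where "z i = epoch_pt g eta s x i" for i
  define Gs where "Gs i = G (s (Suc i))" for i
  define T where "T i = (\<Sum>j<i. Gs j)" for i
  define d where "d = norm (p - x)"
  have idx: "s (Suc i) \<in> {1..n}" if "i < n" for i
    using that permutes_in_image[OF perm] by simp
  have grad_le: "norm (g (s (Suc i)) v) \<le> Gs i" if "i < n" for i v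
    using grad_bound subgrad idx[OF that] unfolding Gs_def by blast
  have Gs_nonneg: "Gs i \<ge> 0" if "i < n" for i
    using grad_le[OF that] norm_ge_zero order_trans by blast
  have sum_Gs: "(\<Sum>i<n. Gs i) = (\<Sum>i=1..n. G i)"
    unfolding Gs_def by (rule sum_shift_permutes[OF perm])
  have drift: "norm (z i - p) \<le> eta * T i + d" if "i \<le> n" for i
  proof -
    have "norm (z i - x) \<le> eta * T i"
      unfolding z_def T_def
      by (rule norm_epoch_pt_diff_le) (use grad_le that \<open>eta \<ge> 0\<close> in auto)
    thus ?thesis using norm_triangle_ineq4[of "z i - x" "p - x"] by (simp add: d_def)
  qed
  \<comment> \<open>The i-th inner gradient is taken at z i, not at p; the subgradient inequalities at z i and
    at p pay for this with 2 G (norm (z i - p)), and the drift of z i is at most eta T i.\<close>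
  have step: "inner (g (s (Suc i)) (z i)) (y - p)
      \<le> fs (s (Suc i)) y - fs (s (Suc i)) p + 2 * Gs i * (eta * T i + d)" if "i < n" for i
  proof -
    have "inner (g (s (Suc i)) (z i)) (y - p)
        \<le> fs (s (Suc i)) y - fs (s (Suc i)) p + 2 * Gs i * norm (z i - p)"
      by (rule subgrad_inner_le) (use subgrad idx[OF that] grad_le[OF that] in auto)
    also have "\<dots> \<le> fs (s (Suc i)) y - fs (s (Suc i)) p + 2 * Gs i * (eta * T i + d)"
      using drift[of i] that Gs_nonneg[OF that] by (simp add: mult_left_mono)
    finally show ?thesis .
  qed
  have "inner (\<Sum>i<n. g (s (Suc i)) (z i)) (y - p)
      \<le> (\<Sum>i<n. fs (s (Suc i)) y - fs (s (Suc i)) p + 2 * Gs i * (eta * T i + d))"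
    unfolding inner_sum_left by (rule sum_mono) (use step in auto)
  also have "\<dots> = (\<Sum>i=1..n. fs i y) - (\<Sum>i=1..n. fs i p)
      + 2 * eta * (\<Sum>i<n. Gs i * T i) + 2 * (\<Sum>i<n. Gs i) * d"
    using sum_shift_permutes[OF perm, of "\<lambda>i. fs i y"] sum_shift_permutes[OF perm, of "\<lambda>i. fs i p"]
    by (simp add: sum.distrib sum_subtractf sum_distrib_left sum_distrib_right algebra_simps)
  also have "\<dots> \<le> (\<Sum>i=1..n. fs i y) - (\<Sum>i=1..n. fs i p)
      + eta * (\<Sum>i=1..n. G i)\<^sup>2 + 2 * (\<Sum>i=1..n. G i) * d"
    using mult_left_mono[OF sum_mult_partial_sums_le[of n Gs], of "2 * eta"] Gs_nonneg sum_Gs \<open>eta \<ge> 0\<close>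
    unfolding T_def by simp
  finally show ?thesis unfolding z_def d_def .
qed

lemma prox_shuffling_epoch_ineq:
  fixes x p y :: "'a::euclidean_space"
  assumes subgrad: "\<forall>i\<in>{1..n}. \<forall>v. is_subgrad (fs i) v (g i v)"
    and grad_bound: "\<forall>i\<in>{1..n}. \<forall>v w. is_subgrad (fs i) v w \<longrightarrow> norm w \<le> G i"
    and perm: "s permutes {1..n}" and "eta > 0"
    and "convex D" "convex_on D psi" "p \<in> D" "y \<in> D"
    and prox_min: "\<forall>w\<in>D. real n * psi p + 1 / (2 * eta) * (norm (p - epoch_pt g eta s x n))\<^sup>2
                          \<le> real n * psi w + 1 / (2 * eta) * (norm (w - epoch_pt g eta s x n))\<^sup>2"
  shows "(norm (p - y))\<^sup>2 \<le> (norm (x - y))\<^sup>2 + 6 * eta\<^sup>2 * (\<Sum>i=1..n. G i)\<^sup>2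
     - 2 * eta * ((\<Sum>i=1..n. fs i p) + real n * psi p - (\<Sum>i=1..n. fs i y) - real n * psi y)"
proof -
  define S where "S = (\<Sum>i=1..n. G i)"
  define d where "d = norm (p - x)"
  define v where "v = (\<Sum>i<n. g (s (Suc i)) (epoch_pt g eta s x i))"
  have "real n * (psi p - psi y) \<le> 1 / eta * inner (p - epoch_pt g eta s x n) (y - p)"
    by (rule prox_variational_ineq) (use assms in auto)
  also have "p - epoch_pt g eta s x n = (p - x) + eta *\<^sub>R v"
    unfolding v_def by (subst epoch_pt_eq_sum) simp
  finally have "real n * (psi p - psi y) \<le> 1 / eta * inner ((p - x) + eta *\<^sub>R v) (y - p)" .
  hence "2 * eta * (real n * (psi p - psi y))
      \<le> 2 * eta * (1 / eta * inner ((p - x) + eta *\<^sub>R v) (y - p))"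
    using \<open>eta > 0\<close> by (intro mult_left_mono) auto
  also have "\<dots> = 2 * inner (p - x) (y - p) + 2 * eta * inner v (y - p)"
    using \<open>eta > 0\<close> by (simp only: inner_add_left inner_scaleR_left) (simp add: field_simps)
  finally have prox: "2 * eta * (real n * (psi p - psi y))
      \<le> 2 * inner (p - x) (y - p) + 2 * eta * inner v (y - p)" .
  have "(norm (x - y))\<^sup>2 = (norm ((p - y) - (p - x)))\<^sup>2" by (simp add: algebra_simps)
  hence pythagoras: "2 * inner (p - x) (y - p) = (norm (x - y))\<^sup>2 - d\<^sup>2 - (norm (p - y))\<^sup>2"
    unfolding d_def power2_norm_eq_inner by (simp add: inner_diff inner_commute algebra_simps)
  have "2 * eta * inner v (y - p)
      \<le> 2 * eta * ((\<Sum>i=1..n. fs i y) - (\<Sum>i=1..n. fs i p) + eta * S\<^sup>2 + 2 * S * d)"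
    using epoch_grad_sum_inner_le[OF subgrad grad_bound perm, of eta x y p] \<open>eta > 0\<close>
    unfolding v_def S_def d_def by (intro mult_left_mono) auto
  moreover have "4 * eta * S * d \<le> 4 * eta\<^sup>2 * S\<^sup>2 + d\<^sup>2"
    using zero_le_power2[of "2 * eta * S - d"] by (simp add: power2_eq_square algebra_simps)
  ultimately show ?thesis
    using prox pythagoras unfolding S_def[symmetric]
    by (simp add: algebra_simps power2_eq_square)
qed

lemma prox_shuffling_epoch_dist_to_minimizer:
  fixes x p xstar :: "'a::euclidean_space"
  assumes subgrad: "\<forall>i\<in>{1..n}. \<forall>v. is_subgrad (fs i) v (g i v)"
    and grad_bound: "\<forall>i\<in>{1..n}. \<forall>v w. is_subgrad (fs i) v w \<longrightarrow> norm w \<le> G i"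
    and perm: "s permutes {1..n}" and "eta > 0" and "n \<ge> 1"
    and "convex D" "convex_on D psi" "p \<in> D" "xstar \<in> D"
    and xstar_min: "\<forall>y\<in>D. (\<Sum>i=1..n. fs i xstar) / real n + psi xstar
                            \<le> (\<Sum>i=1..n. fs i y) / real n + psi y"
    and prox_min: "\<forall>w\<in>D. real n * psi p + 1 / (2 * eta) * (norm (p - epoch_pt g eta s x n))\<^sup>2
                          \<le> real n * psi w + 1 / (2 * eta) * (norm (w - epoch_pt g eta s x n))\<^sup>2"
  shows "(norm (p - xstar))\<^sup>2 \<le> (norm (x - xstar))\<^sup>2 + 6 * eta\<^sup>2 * (\<Sum>i=1..n. G i)\<^sup>2"
proof -
  have "real n * ((\<Sum>i=1..n. fs i xstar) / real n + psi xstar)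
      \<le> real n * ((\<Sum>i=1..n. fs i p) / real n + psi p)"
    using xstar_min \<open>p \<in> D\<close> by (intro mult_left_mono) auto
  hence "(\<Sum>i=1..n. fs i xstar) + real n * psi xstar \<le> (\<Sum>i=1..n. fs i p) + real n * psi p"
    using \<open>n \<ge> 1\<close> by (simp add: distrib_left)
  moreover have "(norm (p - xstar))\<^sup>2 \<le> (norm (x - xstar))\<^sup>2 + 6 * eta\<^sup>2 * (\<Sum>i=1..n. G i)\<^sup>2
      - 2 * eta * ((\<Sum>i=1..n. fs i p) + real n * psi p - (\<Sum>i=1..n. fs i xstar) - real n * psi xstar)"
    by (rule prox_shuffling_epoch_ineq) (use assms in auto)
  ultimately show ?thesis using \<open>eta > 0\<close> by (smt (verit) mult_nonneg_nonneg)
qed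

lemma adaptive_iterates_bounded:
  fixes x :: "nat \<Rightarrow> 'a::real_normed_vector" and xstar :: 'a and a :: "nat \<Rightarrow> real"
  assumes "r > 0" "0 < c" "c < 1"
    and a_nonneg: "\<And>k. a k \<ge> 0"
    and a_sum: "\<And>m. (\<Sum>l=1..m. a l) \<le> c\<^sup>2"
    and step: "\<And>k. k \<ge> 1 \<Longrightarrow> (norm (x (Suc k) - xstar))\<^sup>2
      \<le> (norm (x k - xstar))\<^sup>2 + (max r (Max ((\<lambda>l. norm (x l - x 1)) ` {1..k})))\<^sup>2 * a k"
    and "k \<ge> 1"
  shows "norm (x k - x 1) \<le> 2 / (1 - c) * norm (xstar - x 1) + c / (1 - c) * r"
proof -
  define D0 where "D0 = norm (xstar - x 1)"
  define B where "B = 2 / (1 - c) * D0 + c / (1 - c) * r"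
  define R where "R = max r B"
  have "D0 \<ge> 0" "B \<ge> 0" "R \<ge> 0" using assms by (auto simp: B_def D0_def R_def)
  have radius_closes: "2 * D0 + c * R \<le> B"
  proof -
    have "B = (2 * D0 + c * r) / (1 - c)" by (simp add: B_def add_divide_distrib)
    hence "(1 - c) * B = 2 * D0 + c * r" using \<open>c < 1\<close> by simp
    moreover have "c * R \<le> c * r + c * B"
      using \<open>0 < c\<close> \<open>r > 0\<close> \<open>B \<ge> 0\<close> by (simp add: R_def max_def distrib_left[symmetric])
    ultimately show ?thesis by (simp add: algebra_simps)
  qed
  have invariant: "(\<forall>j\<in>{1..Suc m}. norm (x j - x 1) \<le> B)
      \<and> (norm (x (Suc m) - xstar))\<^sup>2 \<le> D0\<^sup>2 + R\<^sup>2 * (\<Sum>l=1..m. a l)" for m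
  proof (induction m)
    case 0
    show ?case using \<open>B \<ge> 0\<close> by (simp add: D0_def norm_minus_commute)
  next
    case (Suc m)
    let ?k = "Suc m"
    have "max r (Max ((\<lambda>l. norm (x l - x 1)) ` {1..?k})) \<le> R"
      using Suc.IH by (subst max.bounded_iff) (auto simp: R_def)
    hence "(max r (Max ((\<lambda>l. norm (x l - x 1)) ` {1..?k})))\<^sup>2 * a ?k \<le> R\<^sup>2 * a ?k"
      using a_nonneg \<open>r > 0\<close> by (intro mult_right_mono power_mono) auto
    hence sq_dist: "(norm (x (Suc ?k) - xstar))\<^sup>2 \<le> D0\<^sup>2 + R\<^sup>2 * (\<Sum>l=1..?k. a l)"
      using step[of ?k] Suc.IH by (simp add: distrib_left)
    also have "\<dots> \<le> D0\<^sup>2 + R\<^sup>2 * c\<^sup>2 + 2 * c * D0 * R"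
      using mult_left_mono[OF a_sum[of ?k], of "R\<^sup>2"] \<open>D0 \<ge> 0\<close> \<open>R \<ge> 0\<close> \<open>0 < c\<close>
      by (simp del: sum.cl_ivl_Suc add: add_increasing2)
    also have "\<dots> = (D0 + c * R)\<^sup>2" by (simp add: power2_eq_square algebra_simps)
    finally have "norm (x (Suc ?k) - xstar) \<le> D0 + c * R"
      by (rule power2_le_imp_le) (use \<open>D0 \<ge> 0\<close> \<open>R \<ge> 0\<close> \<open>0 < c\<close> in simp)
    hence "norm (x (Suc ?k) - x 1) \<le> B"
      using norm_triangle_ineq[of "x (Suc ?k) - xstar" "xstar - x 1"] radius_closes
      by (simp add: D0_def)
    thus ?case using Suc.IH sq_dist by (auto simp: le_Suc_eq)
  qed
  obtain m where "k = Suc m" using \<open>k \<ge> 1\<close> by (cases k) auto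
  thus ?thesis using invariant[of m] by (simp add: B_def D0_def)
qed

theorem mainTheorem12:
  fixes n :: nat
    and fs :: "nat \<Rightarrow> 'a::euclidean_space \<Rightarrow> real"
    and g :: "nat \<Rightarrow> 'a \<Rightarrow> 'a"
    and psi :: "'a \<Rightarrow> real" and D :: "'a set"
    and G :: "nat \<Rightarrow> real"
    and x :: "nat \<Rightarrow> 'a" and xstar :: 'a
    and sigma :: "nat \<Rightarrow> nat \<Rightarrow> nat"
    and eta eta_t :: "nat \<Rightarrow> real"
    and r c :: real
  assumes n_pos: "n \<ge> 1"
    and fs_convex: "\<forall>i\<in>{1..n}. convex_on UNIV (fs i)"
    and g_subgrad: "\<forall>i\<in>{1..n}. \<forall>y. is_subgrad (fs i) y (g i y)"
    and psi_proper: "D \<noteq> {}"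
    and psi_convex: "convex D" "convex_on D psi"
    and psi_closed: "closed {(y, t). y \<in> D \<and> psi y \<le> t}"
    and xstar_min: "xstar \<in> D"
      "\<forall>y\<in>D. (\<Sum>i=1..n. fs i xstar) / real n + psi xstar
               \<le> (\<Sum>i=1..n. fs i y) / real n + psi y"
    and G_pos: "\<forall>i\<in>{1..n}. G i > 0"
    and G_bound: "\<forall>i\<in>{1..n}. \<forall>y v. is_subgrad (fs i) y v \<longrightarrow> norm v \<le> G i"
    and x1_dom: "x 1 \<in> D"
    and sigma_perm: "\<forall>k\<ge>1. sigma k permutes {1..n}"
    and eta_pos: "\<forall>k\<ge>1. eta k > 0"
    and prox_step: "\<forall>k\<ge>1. x (Suc k) \<in> D \<and>
        (\<forall>y\<in>D. real n * psi (x (Suc k))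
                 + (1 / (2 * eta k)) * (norm (x (Suc k) - epoch_pt g (eta k) (sigma k) (x k) n))\<^sup>2
               \<le> real n * psi y
                 + (1 / (2 * eta k)) * (norm (y - epoch_pt g (eta k) (sigma k) (x k) n))\<^sup>2)"
    and r_pos: "r > 0"
    and eta_t_pos: "\<forall>k\<ge>1. eta_t k > 0"
    and eta_def: "\<forall>k\<ge>1. eta k = max r (Max ((\<lambda>l. norm (x l - x 1)) ` {1..k})) * eta_t k"
    and c_bounds: "0 < c" "c < 1"
    and eta_t_sum: "summable (\<lambda>k. 6 * ((\<Sum>i=1..n. G i) / real n)\<^sup>2 * (real n)\<^sup>2 * (eta_t (Suc k))\<^sup>2)"
      "(\<Sum>k. 6 * ((\<Sum>i=1..n. G i) / real n)\<^sup>2 * (real n)\<^sup>2 * (eta_t (Suc k))\<^sup>2) \<le> c\<^sup>2"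
  shows "\<forall>k\<ge>1. norm (x k - x 1) \<le> 2 / (1 - c) * norm (xstar - x 1) + c / (1 - c) * r"
\<comment> \<open>Convexity of the fs i follows from the existence of subgradients, and closedness of psi
  only guarantees that the proximal points exist, which prox_step already provides.\<close>
proof (intro allI impI)
  define a where "a k = 6 * ((\<Sum>i=1..n. G i) / real n)\<^sup>2 * (real n)\<^sup>2 * (eta_t k)\<^sup>2" for k
  have a_eq: "a k = 6 * (\<Sum>i=1..n. G i)\<^sup>2 * (eta_t k)\<^sup>2" for k
    using n_pos by (simp add: a_def power_divide)
  have a_sum: "(\<Sum>l=1..m. a l) \<le> c\<^sup>2" for m
  proof -
    have "(\<Sum>l=1..m. a l) = (\<Sum>l<m. a (Suc l))" by (rule sum_bounds_lt_plus1[symmetric])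
    also have "\<dots> \<le> (\<Sum>l. a (Suc l))"
      using eta_t_sum(1) by (intro sum_le_suminf) (auto simp: a_def)
    finally show "(\<Sum>l=1..m. a l) \<le> c\<^sup>2" using eta_t_sum(2) by (simp add: a_def)
  qed
  have step: "(norm (x (Suc k) - xstar))\<^sup>2 \<le> (norm (x k - xstar))\<^sup>2
      + (max r (Max ((\<lambda>l. norm (x l - x 1)) ` {1..k})))\<^sup>2 * a k" if "k \<ge> 1" for k
    using prox_shuffling_epoch_dist_to_minimizer[OF g_subgrad G_bound, of "sigma k" "eta k" D psi
        "x (Suc k)" xstar] n_pos psi_convex xstar_min sigma_perm eta_pos prox_step eta_def that
    by (simp add: a_eq power_mult_distrib mult_ac)
  fix k :: nat assume "k \<ge> 1"
  show "norm (x k - x 1) \<le> 2 / (1 - c) * norm (xstar - x 1) + c / (1 - c) * r"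
    by (rule adaptive_iterates_bounded[OF r_pos c_bounds _ a_sum step \<open>k \<ge> 1\<close>]) (simp add: a_eq)
qed

end
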